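(* Let $b>1$. The reduced prolate system $(\ell_{23},G_{pro})$ on $M_h\cong S^2\times S^2$ ($2h=1$), where $G_{pro}=b\ell_{12}^2+b\ell_{13}^2+\ell_{14}^2$, is a generalised semi-toric system.
   Context: $\mathbf L=(\ell_{12},\ell_{13},\ell_{14},\ell_{23},\ell_{24},\ell_{34})\in\mathbb R^6\cong\mathfrak{so}(4)^*$ with the Lie–Poisson bracket of $\mathfrak{so}(4)$ (extending $\ell_{ji}=-\ell_{ij}$: $\{\ell_{ij},\ell_{jk}\}=-\ell_{ik}$ for distinct $i,j,k$, and $\{\ell_{ij},\ell_{kl}\}=0$ when $\{i,j\}\cap\{k,l\}=\emptyset$). $M_h=\{\mathbf L:\sum_{i<j}\ell_{ij}^2=2h,\ \ell_{12}\ell_{34}-\ell_{13}\ell_{24}+\ell_{14}\ell_{23}=0\}$. A (generalised) semi-toric system is a two-degree-of-freedom integrable system $(J,G)$ on a four-dimensional symplectic manifold in which $J$ generates a global (effective) Hamiltonian $S^1$-action and all singularities of the momentum map are of elliptic or focus-focus type (no hyperbolic components, no degenerate singularities). *)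

theory Defs
  imports "HOL-Analysis.Analysis"
begin

text \<open>Coordinates on so(4)* = R^6: index 1..6 of type 6 stand for
  l12, l13, l14, l23, l24, l34 (in this order).\<close>

definition pr6 :: "6 \<Rightarrow> nat \<times> nat" where
  "pr6 a = (if a = 1 then (1,2) else if a = 2 then (1,3) else if a = 3 then (1,4)
     else if a = 4 then (2,3) else if a = 5 then (2,4) else (3,4))"

definition idx6 :: "nat \<Rightarrow> nat \<Rightarrow> 6" where
  "idx6 i j = (if (i,j) = (1,2) then 1 else if (i,j) = (1,3) then 2
     else if (i,j) = (1,4) then 3 else if (i,j) = (2,3) then 4
     else if (i,j) = (2,4) then 5 else 6)"

definition ell :: "real^6 \<Rightarrow> nat \<Rightarrow> nat \<Rightarrow> real" where
  "ell L i j = (if i < j then L $ idx6 i j else if j < i then - (L $ idx6 j i) else 0)"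

definition kd :: "nat \<Rightarrow> nat \<Rightarrow> real" where
  "kd i j = (if i = j then 1 else 0)"

text \<open>Lie--Poisson tensor of so(4): {l_ij, l_kl} =
  -(d_jk l_il - d_ik l_jl - d_jl l_ik + d_il l_jk); this gives
  {l_ij, l_jk} = - l_ik and {l_ij, l_kl} = 0 for disjoint index pairs.\<close>
definition poisson_tensor :: "real^6 \<Rightarrow> 6 \<Rightarrow> 6 \<Rightarrow> real" where
  "poisson_tensor L a b = (let (i,j) = pr6 a; (k,l) = pr6 b in
     - (kd j k * ell L i l - kd i k * ell L j l - kd j l * ell L i k + kd i l * ell L j k))"

definition pd :: "(real^6 \<Rightarrow> real) \<Rightarrow> real^6 \<Rightarrow> 6 \<Rightarrow> real" where
  "pd f L b = frechet_derivative f (at L) (axis b 1)"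

definition pbr :: "(real^6 \<Rightarrow> real) \<Rightarrow> (real^6 \<Rightarrow> real) \<Rightarrow> real^6 \<Rightarrow> real" where
  "pbr f g L = (\<Sum>a\<in>UNIV. \<Sum>b\<in>UNIV. pd f L a * poisson_tensor L a b * pd g L b)"

definition hamvf :: "(real^6 \<Rightarrow> real) \<Rightarrow> real^6 \<Rightarrow> real^6" where
  "hamvf f L = (\<chi> a. \<Sum>b\<in>UNIV. poisson_tensor L a b * pd f L b)"

definition jacm :: "(real^6 \<Rightarrow> real^6) \<Rightarrow> real^6 \<Rightarrow> real^6^6" where
  "jacm F L = (\<chi> a b. frechet_derivative (\<lambda>x. F x $ a) (at L) (axis b 1))"

definition Mh :: "real \<Rightarrow> (real^6) set" where
  "Mh h = {L. (\<Sum>a\<in>UNIV. (L $ a)^2) = 2 * h \<and>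
              L$1 * L$6 - L$2 * L$5 + L$3 * L$4 = 0}"

text \<open>Tangent space of M_h at L (kernel of the differentials of the two Casimirs).\<close>
definition tanMh :: "real^6 \<Rightarrow> (real^6) set" where
  "tanMh L = {v. (\<Sum>a\<in>UNIV. L $ a * v $ a) = 0 \<and>
     v$1 * L$6 + L$1 * v$6 - v$2 * L$5 - L$2 * v$5 + v$3 * L$4 + L$3 * v$4 = 0}"

definition momentum_rank :: "(real^6 \<Rightarrow> real) \<Rightarrow> (real^6 \<Rightarrow> real) \<Rightarrow> real^6 \<Rightarrow> nat" where
  "momentum_rank J G L =
     dim ((\<lambda>v. (frechet_derivative J (at L) v, frechet_derivative G (at L) v)) ` tanMh L)"

definition cplx :: "real^6^6 \<Rightarrow> complex^6^6" where
  "cplx A = (\<chi> i j. complex_of_real (A $ i $ j))"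

definition eig_on_tan :: "real^6 \<Rightarrow> real^6^6 \<Rightarrow> complex \<Rightarrow> bool" where
  "eig_on_tan L A \<mu> \<longleftrightarrow> (\<exists>v::complex^6. v \<noteq> 0 \<and>
      (\<chi> i. Re (v $ i)) \<in> tanMh L \<and> (\<chi> i. Im (v $ i)) \<in> tanMh L \<and>
      cplx A *v v = \<mu> *s v)"

definition regular_on_tan :: "real^6 \<Rightarrow> real^6^6 \<Rightarrow> bool" where
  "regular_on_tan L B \<longleftrightarrow> (\<exists>m1 m2 m3 m4. distinct [m1, m2, m3, m4] \<and>
      eig_on_tan L B m1 \<and> eig_on_tan L B m2 \<and> eig_on_tan L B m3 \<and> eig_on_tan L B m4)"

definition indep_on_tan :: "real^6 \<Rightarrow> real^6^6 \<Rightarrow> real^6^6 \<Rightarrow> bool" where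
  "indep_on_tan L A B \<longleftrightarrow> (\<forall>c1 c2. (\<forall>v\<in>tanMh L. (c1 *\<^sub>R A + c2 *\<^sub>R B) *v v = 0)
      \<longrightarrow> c1 = 0 \<and> c2 = 0)"

text \<open>Non-degenerate rank-0 singularities: the linearisations span a Cartan subalgebra
  of sp(T_L M_h) (independent, containing a regular element); its Williamson type is read
  off the eigenvalues of a regular element.\<close>
definition elliptic_elliptic :: "(real^6 \<Rightarrow> real) \<Rightarrow> (real^6 \<Rightarrow> real) \<Rightarrow> real^6 \<Rightarrow> bool" where
  "elliptic_elliptic J G L \<longleftrightarrow> indep_on_tan L (jacm (hamvf J) L) (jacm (hamvf G) L) \<and>
     (\<exists>c1 c2. let B = c1 *\<^sub>R jacm (hamvf J) L + c2 *\<^sub>R jacm (hamvf G) L in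
        regular_on_tan L B \<and> (\<forall>\<mu>. eig_on_tan L B \<mu> \<longrightarrow> Re \<mu> = 0))"

definition focus_focus :: "(real^6 \<Rightarrow> real) \<Rightarrow> (real^6 \<Rightarrow> real) \<Rightarrow> real^6 \<Rightarrow> bool" where
  "focus_focus J G L \<longleftrightarrow> indep_on_tan L (jacm (hamvf J) L) (jacm (hamvf G) L) \<and>
     (\<exists>c1 c2. let B = c1 *\<^sub>R jacm (hamvf J) L + c2 *\<^sub>R jacm (hamvf G) L in
        regular_on_tan L B \<and> (\<forall>\<mu>. eig_on_tan L B \<mu> \<longrightarrow> Re \<mu> \<noteq> 0 \<and> Im \<mu> \<noteq> 0))"

text \<open>Non-degenerate transversally elliptic rank-1 singularity: for the combination
  f = c1 J + c2 G with df = 0 on T_L M_h, the linearisation of X_f has a non-zero purely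
  imaginary eigenvalue (its transversal part has eigenvalues +-i w, w non-zero).\<close>
definition transv_elliptic :: "(real^6 \<Rightarrow> real) \<Rightarrow> (real^6 \<Rightarrow> real) \<Rightarrow> real^6 \<Rightarrow> bool" where
  "transv_elliptic J G L \<longleftrightarrow> (\<exists>c1 c2. (c1, c2) \<noteq> (0, 0) \<and>
     (\<forall>v\<in>tanMh L. c1 * frechet_derivative J (at L) v + c2 * frechet_derivative G (at L) v = 0) \<and>
     (\<exists>\<mu>. eig_on_tan L (c1 *\<^sub>R jacm (hamvf J) L + c2 *\<^sub>R jacm (hamvf G) L) \<mu> \<and>
          Re \<mu> = 0 \<and> \<mu> \<noteq> 0))"

definition generates_S1 :: "(real^6) set \<Rightarrow> (real^6 \<Rightarrow> real) \<Rightarrow> bool" where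
  "generates_S1 M J \<longleftrightarrow> (\<exists>\<phi> :: real \<Rightarrow> real^6 \<Rightarrow> real^6.
     (\<forall>L\<in>M. \<phi> 0 L = L \<and> (\<forall>t. \<phi> t L \<in> M) \<and>
        (\<forall>t. ((\<lambda>s. \<phi> s L) has_vector_derivative hamvf J (\<phi> t L)) (at t)) \<and>
        (\<forall>t. \<phi> (t + 2 * pi) L = \<phi> t L)) \<and>
     (\<forall>t. 0 < t \<and> t < 2 * pi \<longrightarrow> (\<exists>L\<in>M. \<phi> t L \<noteq> L)))"

definition gen_semitoric :: "(real^6) set \<Rightarrow> (real^6 \<Rightarrow> real) \<Rightarrow> (real^6 \<Rightarrow> real) \<Rightarrow> bool" where
  "gen_semitoric M J G \<longleftrightarrow>
     (\<forall>L\<in>M. J differentiable (at L) \<and> G differentiable (at L) \<and>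
        hamvf J differentiable (at L) \<and> hamvf G differentiable (at L)) \<and>
     (\<forall>L\<in>M. pbr J G L = 0) \<and>
     M \<subseteq> closure {L\<in>M. momentum_rank J G L = 2} \<and>
     generates_S1 M J \<and>
     (\<forall>L\<in>M. momentum_rank J G L = 0 \<longrightarrow> elliptic_elliptic J G L \<or> focus_focus J G L) \<and>
     (\<forall>L\<in>M. momentum_rank J G L = 1 \<longrightarrow> transv_elliptic J G L)"

end

(*
  Write J = l23 and G = G_pro.  The flow of J rotates the planes (l12, l13) and (l24, l34)
  simultaneously; this is the effective S^1-action.  The tangent space of M_h at L is the
  orthogonal complement of L and its Hodge dual *L, so the momentum map drops rank exactly where
  a non-trivial combination of the gradients of J and G lies in span {L, *L}.  For b > 1 this
  linear system forces L onto the sphere {l12 = l13 = l14 = 0}, onto the sphere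
  {l14 = l24 = l34 = 0}, or to one of the points l14 = +-1.  In the coordinates M_h = S^2 x S^2
  given by the self-dual and anti-self-dual parts of L this critical set is nowhere dense, since
  it determines the second factor from the first up to finitely many choices.

  The rank-0 points are l23 = +-1 and l14 = +-1.  There the linearisation of X_J + X_G has
  eigenvalues +-i (2 b l23 - 1), +-i, respectively +-2 sqrt (b - 1) +- i: elliptic-elliptic and
  focus-focus.  At a rank-1 point of the first (second) sphere the linearisation of X_G
  (of 2 b l23 X_J + X_G) squares to a negative multiple of the identity on a plane
  transversal to the orbit, so these points are transversally elliptic.
*)

theory Submission
  imports Defs
begin

lemma exhaust_6:
  fixes x :: 6
  shows "x = 1 \<or> x = 2 \<or> x = 3 \<or> x = 4 \<or> x = 5 \<or> x = 6"
proof (induct x)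
  case (of_int z)
  then have "z = 0 \<or> z = 1 \<or> z = 2 \<or> z = 3 \<or> z = 4 \<or> z = 5" by fastforce
  then show ?case by auto
qed

lemma forall_6: "(\<forall>i::6. P i) \<longleftrightarrow> P 1 \<and> P 2 \<and> P 3 \<and> P 4 \<and> P 5 \<and> P 6"
  by (metis exhaust_6)

lemma UNIV_6: "UNIV = {1, 2, 3, 4, 5, 6::6}"
  using exhaust_6 by auto

lemma sum_6: "sum f (UNIV::6 set) = f 1 + f 2 + f 3 + f 4 + f 5 + f 6"
  unfolding UNIV_6 by (simp add: ac_simps)

lemma vector_6 [simp]:
  "(vector [a, b, c, d, e, f] :: 'a::zero^6) $ 1 = a"
  "(vector [a, b, c, d, e, f] :: 'a::zero^6) $ 2 = b"
  "(vector [a, b, c, d, e, f] :: 'a::zero^6) $ 3 = c"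
  "(vector [a, b, c, d, e, f] :: 'a::zero^6) $ 4 = d"
  "(vector [a, b, c, d, e, f] :: 'a::zero^6) $ 5 = e"
  "(vector [a, b, c, d, e, f] :: 'a::zero^6) $ 6 = f"
  unfolding vector_def by simp_all

lemma vec6_eq_iff:
  "(x::'a^6) = y \<longleftrightarrow> x$1 = y$1 \<and> x$2 = y$2 \<and> x$3 = y$3 \<and> x$4 = y$4 \<and> x$5 = y$5 \<and> x$6 = y$6"
  by (simp add: vec_eq_iff forall_6)

lemma inner_6:
  "x \<bullet> (y::real^6) = x$1 * y$1 + x$2 * y$2 + x$3 * y$3 + x$4 * y$4 + x$5 * y$5 + x$6 * y$6"
  by (simp add: inner_vec_def sum_6)

lemma has_derivative_vec_nth [derivative_intros]:
  "(f has_derivative f') F \<Longrightarrow> ((\<lambda>x. f x $ i) has_derivative (\<lambda>v. f' v $ i)) F"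
  by (rule bounded_linear.has_derivative[OF bounded_linear_vec_nth])

lemma has_derivative_vec_componentwise:
  fixes f :: "'a::real_normed_vector \<Rightarrow> real^'n"
  shows "(f has_derivative f') (at x within S) \<longleftrightarrow>
    (\<forall>i. ((\<lambda>y. f y $ i) has_derivative (\<lambda>v. f' v $ i)) (at x within S))"
  by (auto simp: has_derivative_componentwise_within[of f] Basis_vec_def inner_axis
      intro: has_derivative_vec_nth)

lemma has_derivative_vector_6 [derivative_intros]:
  fixes f1 f2 f3 f4 f5 f6 :: "'a::real_normed_vector \<Rightarrow> real"
  assumes "(f1 has_derivative f1') (at x within S)" "(f2 has_derivative f2') (at x within S)"
    "(f3 has_derivative f3') (at x within S)" "(f4 has_derivative f4') (at x within S)"
    "(f5 has_derivative f5') (at x within S)" "(f6 has_derivative f6') (at x within S)"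
  shows "((\<lambda>y. vector [f1 y, f2 y, f3 y, f4 y, f5 y, f6 y] :: real^6) has_derivative
    (\<lambda>v. vector [f1' v, f2' v, f3' v, f4' v, f5' v, f6' v])) (at x within S)"
  unfolding has_derivative_vec_componentwise forall_6 using assms by simp

lemma jacm_mult_vec:
  assumes "(F has_derivative F') (at L)"
  shows "jacm F L *v v = F' v"
proof -
  have "jacm F L = matrix F'"
    by (simp add: jacm_def matrix_def
        frechet_derivative_at[OF has_derivative_vec_nth[OF assms], symmetric])
  then show ?thesis
    using matrix_vector_mul(3)[OF has_derivative_bounded_linear[OF assms]] by metis
qed

lemma pd_gradient: "(f has_derivative (\<lambda>v. g \<bullet> v)) (at L) \<Longrightarrow> pd f L a = g $ a"
  by (simp add: pd_def inner_axis frechet_derivative_at[symmetric])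

lemma hamvf_gradient:
  "(f has_derivative (\<lambda>v. g \<bullet> v)) (at L) \<Longrightarrow>
    hamvf f L = (\<chi> a. \<Sum>b\<in>UNIV. poisson_tensor L a b * g $ b)"
  by (simp add: hamvf_def pd_gradient)

lemma pbr_gradient:
  "(f has_derivative (\<lambda>v. g \<bullet> v)) (at L) \<Longrightarrow> (h has_derivative (\<lambda>v. k \<bullet> v)) (at L) \<Longrightarrow>
    pbr f h L = (\<Sum>a\<in>UNIV. \<Sum>b\<in>UNIV. g $ a * poisson_tensor L a b * k $ b)"
  by (simp add: pbr_def pd_gradient)

lemma poisson_tensor_simps:
  "poisson_tensor L 1 1 = 0"     "poisson_tensor L 1 2 = L$4"   "poisson_tensor L 1 3 = L$5"
  "poisson_tensor L 1 4 = - L$2" "poisson_tensor L 1 5 = - L$3" "poisson_tensor L 1 6 = 0"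
  "poisson_tensor L 2 1 = - L$4" "poisson_tensor L 2 2 = 0"     "poisson_tensor L 2 3 = L$6"
  "poisson_tensor L 2 4 = L$1"   "poisson_tensor L 2 5 = 0"     "poisson_tensor L 2 6 = - L$3"
  "poisson_tensor L 3 1 = - L$5" "poisson_tensor L 3 2 = - L$6" "poisson_tensor L 3 3 = 0"
  "poisson_tensor L 3 4 = 0"     "poisson_tensor L 3 5 = L$1"   "poisson_tensor L 3 6 = L$2"
  "poisson_tensor L 4 1 = L$2"   "poisson_tensor L 4 2 = - L$1" "poisson_tensor L 4 3 = 0"
  "poisson_tensor L 4 4 = 0"     "poisson_tensor L 4 5 = L$6"   "poisson_tensor L 4 6 = - L$5"
  "poisson_tensor L 5 1 = L$3"   "poisson_tensor L 5 2 = 0"     "poisson_tensor L 5 3 = - L$1"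
  "poisson_tensor L 5 4 = - L$6" "poisson_tensor L 5 5 = 0"     "poisson_tensor L 5 6 = L$4"
  "poisson_tensor L 6 1 = 0"     "poisson_tensor L 6 2 = L$3"   "poisson_tensor L 6 3 = - L$2"
  "poisson_tensor L 6 4 = L$5"   "poisson_tensor L 6 5 = - L$4" "poisson_tensor L 6 6 = 0"
  by (simp_all add: poisson_tensor_def pr6_def ell_def kd_def idx6_def)

abbreviation lin_hamvf ::
    "(real^6 \<Rightarrow> real) \<Rightarrow> (real^6 \<Rightarrow> real) \<Rightarrow> real \<Rightarrow> real \<Rightarrow> real^6 \<Rightarrow> real^6^6"
  where "lin_hamvf J G c1 c2 L \<equiv> c1 *\<^sub>R jacm (hamvf J) L + c2 *\<^sub>R jacm (hamvf G) L"

section \<open>The prolate system\<close>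

abbreviation J23 :: "real^6 \<Rightarrow> real" where
  "J23 \<equiv> \<lambda>L. L $ 4"

abbreviation Gpro :: "real \<Rightarrow> real^6 \<Rightarrow> real" where
  "Gpro b \<equiv> \<lambda>L. b * (L $ 1)^2 + b * (L $ 2)^2 + (L $ 3)^2"

definition grad_Gpro :: "real \<Rightarrow> real^6 \<Rightarrow> real^6" where
  "grad_Gpro b L = vector [2 * b * L$1, 2 * b * L$2, 2 * L$3, 0, 0, 0]"

lemma has_derivative_J23: "(J23 has_derivative (\<lambda>v. vector [0, 0, 0, 1, 0, 0] \<bullet> v)) (at L)"
  by (auto intro!: derivative_eq_intros simp: inner_6)

lemma has_derivative_Gpro: "(Gpro b has_derivative (\<lambda>v. grad_Gpro b L \<bullet> v)) (at L)"
  by (auto intro!: derivative_eq_intros simp: inner_6 grad_Gpro_def)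

lemma frechet_derivative_J23:
  "frechet_derivative J23 (at L) = (\<lambda>v. vector [0, 0, 0, 1, 0, 0] \<bullet> v)"
  using frechet_derivative_at[OF has_derivative_J23] by simp

lemma frechet_derivative_Gpro: "frechet_derivative (Gpro b) (at L) = (\<lambda>v. grad_Gpro b L \<bullet> v)"
  using frechet_derivative_at[OF has_derivative_Gpro] by simp

lemma hamvf_J23: "hamvf J23 x = vector [- x$2, x$1, 0, 0, - x$6, x$5]"
  by (simp add: hamvf_gradient[OF has_derivative_J23] sum_6 poisson_tensor_simps vec6_eq_iff)

lemma hamvf_Gpro:
  "hamvf (Gpro b) x = vector [2*b*x$2*x$4 + 2*x$3*x$5, - 2*b*x$1*x$4 + 2*x$3*x$6,
     - 2*b*x$1*x$5 - 2*b*x$2*x$6, 0, 2*(b-1)*x$1*x$3, 2*(b-1)*x$2*x$3]"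
  unfolding hamvf_gradient[OF has_derivative_Gpro]
  by (simp add: grad_Gpro_def sum_6 poisson_tensor_simps vec6_eq_iff algebra_simps)

lemma pbr_J23_Gpro: "pbr J23 (Gpro b) L = 0"
  by (simp add: pbr_gradient[OF has_derivative_J23 has_derivative_Gpro] grad_Gpro_def sum_6
      poisson_tensor_simps)

lemma has_derivative_hamvf_J23: "(hamvf J23 has_derivative hamvf J23) (at L)"
  unfolding hamvf_J23 by (auto intro!: derivative_eq_intros)

definition hamvf_Gpro_deriv :: "real \<Rightarrow> real^6 \<Rightarrow> real^6 \<Rightarrow> real^6" where
  "hamvf_Gpro_deriv b x v = vector [2*b*(v$2*x$4 + x$2 * v$4) + 2*(v$3*x$5 + x$3 * v$5),
     - 2*b*(v$1*x$4 + x$1 * v$4) + 2*(v$3*x$6 + x$3 * v$6),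
     - 2*b*(v$1*x$5 + x$1 * v$5) - 2*b*(v$2*x$6 + x$2 * v$6), 0,
     2*(b-1)*(v$1*x$3 + x$1 * v$3), 2*(b-1)*(v$2*x$3 + x$2 * v$3)]"

lemma has_derivative_hamvf_Gpro: "(hamvf (Gpro b) has_derivative hamvf_Gpro_deriv b L) (at L)"
  unfolding hamvf_Gpro hamvf_Gpro_deriv_def
  by (auto intro!: derivative_eq_intros simp: algebra_simps)

lemma lin_hamvf_prolate_mult:
  "lin_hamvf J23 (Gpro b) c1 c2 L *v v = c1 *\<^sub>R hamvf J23 v + c2 *\<^sub>R hamvf_Gpro_deriv b L v"
  by (simp add: matrix_vector_mult_add_rdistrib scaleR_matrix_vector_assoc[symmetric]
      jacm_mult_vec[OF has_derivative_hamvf_J23] jacm_mult_vec[OF has_derivative_hamvf_Gpro])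

section \<open>Tangent spaces of \<open>M\<^sub>h\<close>\<close>

definition hodge_star :: "real^6 \<Rightarrow> real^6" where
  "hodge_star L = vector [L$6, - L$5, L$4, L$3, - L$2, L$1]"

lemma tanMh_iff: "v \<in> tanMh L \<longleftrightarrow> L \<bullet> v = 0 \<and> hodge_star L \<bullet> v = 0"
  by (simp add: tanMh_def sum_6 inner_6 hodge_star_def algebra_simps)

lemma Mh_half_iff:
  "L \<in> Mh (1/2) \<longleftrightarrow> (L$1)^2 + (L$2)^2 + (L$3)^2 + (L$4)^2 + (L$5)^2 + (L$6)^2 = 1 \<and>
     L$1 * L$6 - L$2 * L$5 + L$3 * L$4 = 0"
  by (simp add: Mh_def sum_6 add.assoc)

lemma Mh_half_orthonormal:
  assumes "L \<in> Mh (1/2)"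
  shows "L \<bullet> L = 1" "L \<bullet> hodge_star L = 0" "hodge_star L \<bullet> hodge_star L = 1"
  using assms by (simp_all add: Mh_half_iff inner_6 hodge_star_def power2_eq_square algebra_simps)

lemma orthonormal_pair_projection:
  fixes p q w :: "'a::real_inner"
  assumes "p \<bullet> p = 1" "q \<bullet> q = 1" "p \<bullet> q = 0"
    and "\<And>v. p \<bullet> v = 0 \<Longrightarrow> q \<bullet> v = 0 \<Longrightarrow> w \<bullet> v = 0"
  shows "w = (w \<bullet> p) *\<^sub>R p + (w \<bullet> q) *\<^sub>R q"
proof -
  define v where "v = w - (w \<bullet> p) *\<^sub>R p - (w \<bullet> q) *\<^sub>R q"
  have pv: "p \<bullet> v = 0" and qv: "q \<bullet> v = 0"
    using assms(1-3) by (simp_all add: v_def inner_diff_right inner_commute)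
  have "v \<bullet> v = w \<bullet> v - (w \<bullet> p) * (p \<bullet> v) - (w \<bullet> q) * (q \<bullet> v)"
    by (simp add: v_def inner_diff_left)
  then have "v = 0"
    using assms(4)[OF pv qv] pv qv by simp
  then show ?thesis
    by (simp add: v_def algebra_simps)
qed

lemma normal_to_tanMh:
  assumes "L \<in> Mh (1/2)" "\<forall>v\<in>tanMh L. w \<bullet> v = 0"
  shows "w = (w \<bullet> L) *\<^sub>R L + (w \<bullet> hodge_star L) *\<^sub>R hodge_star L"
  using assms(2) by (intro orthonormal_pair_projection Mh_half_orthonormal[OF assms(1)])
    (simp add: tanMh_iff)

lemma tanMh_pole_iff:
  assumes "p^2 \<noteq> q^2"
  shows "x \<in> tanMh (vector [0, 0, p, q, 0, 0]) \<longleftrightarrow> x$3 = 0 \<and> x$4 = 0"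
proof -
  have "x$3 = 0 \<and> x$4 = 0" if "p * x$3 + q * x$4 = 0" "q * x$3 + p * x$4 = 0"
  proof -
    have "(p^2 - q^2) * x$3 = 0" "(p^2 - q^2) * x$4 = 0"
      using that by algebra+
    then show ?thesis
      using assms by simp
  qed
  then show ?thesis
    by (auto simp: tanMh_iff inner_6 hodge_star_def algebra_simps)
qed

section \<open>Rank of the momentum map\<close>

lemma momentum_rank_le_2: "momentum_rank J G L \<le> 2"
  using dim_subset_UNIV[where 'a="real \<times> real"] by (simp add: momentum_rank_def eval_nat_numeral)

lemma momentum_rank_lt_2_imp_dependent:
  assumes "momentum_rank J G L < 2"
  obtains c1 c2 where "(c1, c2) \<noteq> (0, 0)"
    "\<forall>v\<in>tanMh L. c1 * frechet_derivative J (at L) v + c2 * frechet_derivative G (at L) v = 0"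
proof -
  let ?f = "\<lambda>v. (frechet_derivative J (at L) v, frechet_derivative G (at L) v)"
  have "dim (?f ` tanMh L) < DIM(real \<times> real)"
    using assms by (simp add: momentum_rank_def)
  then obtain y where y: "y \<noteq> 0" "\<And>z. z \<in> span (?f ` tanMh L) \<Longrightarrow> orthogonal y z"
    using orthogonal_to_subspace_exists by blast
  show ?thesis
  proof (rule that[of "fst y" "snd y"])
    show "(fst y, snd y) \<noteq> (0, 0)"
      using y(1) by (simp add: zero_prod_def)
    show "\<forall>v\<in>tanMh L.
        fst y * frechet_derivative J (at L) v + snd y * frechet_derivative G (at L) v = 0"
    proof
      fix v assume "v \<in> tanMh L"
      then have "orthogonal y (?f v)"
        by (intro y(2) span_base) simp
      then show "fst y * frechet_derivative J (at L) v + snd y * frechet_derivative G (at L) v = 0"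
        by (simp add: orthogonal_def inner_prod_def)
    qed
  qed
qed

lemma momentum_rank_eq_0_iff:
  "momentum_rank J G L = 0 \<longleftrightarrow>
    (\<forall>v\<in>tanMh L. frechet_derivative J (at L) v = 0 \<and> frechet_derivative G (at L) v = 0)"
  by (auto simp: momentum_rank_def zero_prod_def)

definition prolate_critical :: "real^6 \<Rightarrow> bool" where
  "prolate_critical L \<longleftrightarrow> (L$1 = 0 \<and> L$2 = 0 \<and> L$3 = 0) \<or> (L$3 = 0 \<and> L$5 = 0 \<and> L$6 = 0) \<or>
     (L$1 = 0 \<and> L$2 = 0 \<and> L$4 = 0 \<and> L$5 = 0 \<and> L$6 = 0)"

lemma prolate_gradient_relation_rotation:
  fixes x1 x2 x5 x6 c2 \<alpha> \<beta> b :: real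
  assumes x12: "x1 \<noteq> 0 \<or> x2 \<noteq> 0"
    and e1: "2*b*c2*x1 = \<alpha>*x1 + \<beta>*x6" and e2: "2*b*c2*x2 = \<alpha>*x2 - \<beta>*x5"
    and e5: "\<alpha>*x5 = \<beta>*x2" and e6: "\<alpha>*x6 = - \<beta>*x1"
  shows "2*b*c2*\<alpha> = \<alpha>^2 - \<beta>^2"
proof -
  have "(2*b*c2*\<alpha> - \<alpha>^2 + \<beta>^2) * x1 = 0" "(2*b*c2*\<alpha> - \<alpha>^2 + \<beta>^2) * x2 = 0"
    using e1 e2 e5 e6 by algebra+
  then show ?thesis
    using x12 by auto
qed

lemma prolate_gradient_relation_imp_l14_zero:
  fixes x1 x2 x3 x4 x5 x6 c2 \<alpha> \<beta> b :: real
  assumes b: "b > 1" and \<alpha>: "\<alpha> \<noteq> 0" and x12: "x1 \<noteq> 0 \<or> x2 \<noteq> 0"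
    and pf: "x1 * x6 - x2 * x5 + x3 * x4 = 0"
    and e1: "2*b*c2*x1 = \<alpha>*x1 + \<beta>*x6" and e2: "2*b*c2*x2 = \<alpha>*x2 - \<beta>*x5"
    and e3: "2*c2*x3 = \<alpha>*x3 + \<beta>*x4" and e5: "\<alpha>*x5 = \<beta>*x2" and e6: "\<alpha>*x6 = - \<beta>*x1"
  shows "\<beta> = 0 \<and> x3 = 0"
proof -
  define r where "r = x1^2 + x2^2"
  have r: "r > 0"
    using x12 by (simp add: r_def sum_power2_gt_zero_iff)
  have D: "2*b*c2*\<alpha> = \<alpha>^2 - \<beta>^2"
    by (rule prolate_gradient_relation_rotation[OF x12 e1 e2 e5 e6])
  have "\<alpha>*x3*x4 = \<beta>*r"
    using pf e5 e6 unfolding r_def by algebra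
  then have key: "x3^2 * (\<alpha>^2*(1-b) - \<beta>^2) = b*\<beta>^2*r"
    using D e3 by algebra
  have "\<alpha>^2*(1-b) \<le> 0"
    using b by (simp add: mult_nonneg_nonpos)
  then have "\<alpha>^2*(1-b) - \<beta>^2 \<le> 0"
    using zero_le_power2[of \<beta>] by linarith
  then have "x3^2 * (\<alpha>^2*(1-b) - \<beta>^2) \<le> 0"
    by (simp add: mult_nonneg_nonpos)
  moreover have "b*\<beta>^2*r \<ge> 0"
    using b r by simp
  ultimately have "b*\<beta>^2*r = 0"
    using key by linarith
  then have "\<beta> = 0"
    using b r by simp
  then have "x3 = 0"
    using key b \<alpha> by simp
  with \<open>\<beta> = 0\<close> show ?thesis ..
qed

lemma prolate_critical_if_gradients_dependent:
  assumes b: "b > 1" and c: "(c1, c2) \<noteq> (0, 0)"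
    and pf: "L$1 * L$6 - L$2 * L$5 + L$3 * L$4 = 0"
    and w: "c1 *\<^sub>R vector [0, 0, 0, 1, 0, 0] + c2 *\<^sub>R grad_Gpro b L
      = \<alpha> *\<^sub>R L + \<beta> *\<^sub>R hodge_star L"
  shows "prolate_critical L"
proof -
  have e1: "2*b*c2*L$1 = \<alpha>*L$1 + \<beta>*L$6" and e2: "2*b*c2*L$2 = \<alpha>*L$2 - \<beta>*L$5"
    and e3: "2*c2*L$3 = \<alpha>*L$3 + \<beta>*L$4" and e4: "c1 = \<alpha>*L$4 + \<beta>*L$3"
    and e5: "\<alpha>*L$5 = \<beta>*L$2" and e6: "\<alpha>*L$6 = - \<beta>*L$1"
    using w unfolding vec6_eq_iff by (simp_all add: grad_Gpro_def hodge_star_def algebra_simps)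
  consider "\<alpha> = 0" "\<beta> = 0" | "\<alpha> = 0" "\<beta> \<noteq> 0" | "\<alpha> \<noteq> 0" "L$1 = 0" "L$2 = 0"
    | "\<alpha> \<noteq> 0" "L$1 \<noteq> 0 \<or> L$2 \<noteq> 0"
    by blast
  then show ?thesis
  proof cases
    case 1
    then have "c2 \<noteq> 0"
      using c e4 by simp
    then show ?thesis
      using 1 b e1 e2 e3 by (simp add: prolate_critical_def)
  next
    case 2
    then have "L$1 = 0" "L$2 = 0" "L$5 = 0" "L$6 = 0"
      using e1 e2 e5 e6 by simp_all
    then show ?thesis
      using pf by (auto simp: prolate_critical_def)
  next
    case 3
    then have "L$5 = 0" "L$6 = 0"
      using e5 e6 by simp_all
    then show ?thesis
      using 3 pf by (auto simp: prolate_critical_def)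
  next
    case 4
    then have "\<beta> = 0 \<and> L$3 = 0"
      using prolate_gradient_relation_imp_l14_zero[OF b _ _ pf e1 e2 e3 e5 e6] by blast
    then show ?thesis
      using 4 e5 e6 by (simp add: prolate_critical_def)
  qed
qed

lemma prolate_rank_lt_2_imp_critical:
  assumes b: "b > 1" and L: "L \<in> Mh (1/2)" and rank: "momentum_rank J23 (Gpro b) L < 2"
  shows "prolate_critical L"
proof -
  obtain c1 c2 where c: "(c1, c2) \<noteq> (0, 0)"
    and dep: "\<forall>v\<in>tanMh L.
      c1 * frechet_derivative J23 (at L) v + c2 * frechet_derivative (Gpro b) (at L) v = 0"
    using momentum_rank_lt_2_imp_dependent[OF rank] by blast
  define w where "w = c1 *\<^sub>R vector [0, 0, 0, 1, 0, 0] + c2 *\<^sub>R grad_Gpro b L"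
  have "\<forall>v\<in>tanMh L. w \<bullet> v = 0"
    using dep by (simp add: w_def inner_add_left frechet_derivative_J23 frechet_derivative_Gpro)
  then have "w = (w \<bullet> L) *\<^sub>R L + (w \<bullet> hodge_star L) *\<^sub>R hodge_star L"
    by (rule normal_to_tanMh[OF L])
  moreover have "L$1 * L$6 - L$2 * L$5 + L$3 * L$4 = 0"
    using L by (simp add: Mh_half_iff)
  ultimately show ?thesis
    using prolate_critical_if_gradients_dependent[OF b c] by (simp add: w_def)
qed

lemma prolate_rank_eq_2:
  assumes "b > 1" "L \<in> Mh (1/2)" "\<not> prolate_critical L"
  shows "momentum_rank J23 (Gpro b) L = 2"
proof -
  have "\<not> momentum_rank J23 (Gpro b) L < 2"
    using prolate_rank_lt_2_imp_critical[OF assms(1,2)] assms(3) by blast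
  then show ?thesis
    using momentum_rank_le_2[of J23 "Gpro b" L] by simp
qed

lemma prolate_rank_0_cases:
  assumes L: "L \<in> Mh (1/2)" and rank: "momentum_rank J23 (Gpro b) L = 0"
  obtains (elliptic) s where "s^2 = 1" "L = vector [0, 0, 0, s, 0, 0]"
    | (focus) s where "s^2 = 1" "L = vector [0, 0, s, 0, 0, 0]"
proof -
  have "\<forall>v\<in>tanMh L. vector [0, 0, 0, 1, 0, 0] \<bullet> v = 0"
    using rank by (simp add: momentum_rank_eq_0_iff frechet_derivative_J23)
  then have "vector [0, 0, 0, 1, 0, 0] = (vector [0, 0, 0, 1, 0, 0] \<bullet> L) *\<^sub>R L
      + (vector [0, 0, 0, 1, 0, 0] \<bullet> hodge_star L) *\<^sub>R hodge_star L"
    by (rule normal_to_tanMh[OF L])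
  then have "vector [0, 0, 0, 1, 0, 0] = L$4 *\<^sub>R L + L$3 *\<^sub>R hodge_star L"
    by (simp add: inner_6 hodge_star_def)
  then have e: "L$4 * L$1 + L$3 * L$6 = 0" "L$4 * L$2 - L$3 * L$5 = 0" "L$3 * L$4 = 0"
    "(L$3)^2 + (L$4)^2 = 1" "L$4 * L$5 - L$3 * L$2 = 0" "L$4 * L$6 + L$3 * L$1 = 0"
    unfolding vec6_eq_iff by (simp_all add: hodge_star_def power2_eq_square algebra_simps)
  consider "L$3 = 0" "L$4 \<noteq> 0" | "L$4 = 0" "L$3 \<noteq> 0"
    using e(3,4) by fastforce
  then show ?thesis
  proof cases
    case 1
    then show ?thesis
      using e by (intro elliptic[of "L$4"]) (simp_all add: vec6_eq_iff)
  next
    case 2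
    then show ?thesis
      using e by (intro focus[of "L$3"]) (simp_all add: vec6_eq_iff)
  qed
qed

lemma prolate_rank_0_at_l14_pole:
  assumes "s \<noteq> 0"
  shows "momentum_rank J23 (Gpro b) (vector [0, 0, s, 0, 0, 0]) = 0"
proof -
  have "s^2 \<noteq> 0^2"
    using assms by simp
  then show ?thesis
    by (simp add: momentum_rank_eq_0_iff tanMh_pole_iff frechet_derivative_J23
        frechet_derivative_Gpro grad_Gpro_def inner_6)
qed

section \<open>Transversally elliptic points\<close>

lemma cplx_mult_vec:
  "cplx A *v u = (\<chi> i. Complex ((A *v (\<chi> j. Re (u$j)))$i) ((A *v (\<chi> j. Im (u$j)))$i))"
  by (simp add: vec_eq_iff complex_eq_iff matrix_vector_mult_def cplx_def Re_sum Im_sum)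

lemma eig_on_tan_if_square_neg:
  assumes w: "w \<in> tanMh L" "w \<noteq> 0" and Aw: "A *v w \<in> tanMh L"
    and AAw: "A *v (A *v w) = - (\<omega>^2) *\<^sub>R w" and \<omega>: "\<omega> \<noteq> 0"
  shows "eig_on_tan L A (Complex 0 \<omega>)"
proof -
  define u where "u = (\<chi> i. Complex ((A *v w)$i) (\<omega> * w$i))"
  have re: "(\<chi> i. Re (u$i)) = A *v w" and im: "(\<chi> i. Im (u$i)) = \<omega> *\<^sub>R w"
    by (simp_all add: u_def vec_eq_iff)
  have "u \<noteq> 0"
  proof
    assume "u = 0"
    then have "\<omega> *\<^sub>R w = 0"
      using im by (simp add: vec_eq_iff)
    then show False
      using w(2) \<omega> by simp
  qed
  moreover have "\<omega> *\<^sub>R w \<in> tanMh L"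
    using w(1) by (simp add: tanMh_iff)
  moreover have "cplx A *v u = Complex 0 \<omega> *s u"
    unfolding cplx_mult_vec re im using AAw
    by (simp add: vec_eq_iff complex_eq_iff u_def matrix_vector_mult_scaleR power2_eq_square)
  ultimately show ?thesis
    unfolding eig_on_tan_def using Aw re im by metis
qed

lemma transv_ellipticI:
  assumes "(c, d) \<noteq> (0, 0)"
    and "\<forall>v\<in>tanMh L. c * frechet_derivative J (at L) v + d * frechet_derivative G (at L) v = 0"
    and "w \<in> tanMh L" "w \<noteq> 0" "lin_hamvf J G c d L *v w \<in> tanMh L"
    and "lin_hamvf J G c d L *v (lin_hamvf J G c d L *v w) = - (\<omega>^2) *\<^sub>R w" "\<omega> \<noteq> 0"
  shows "transv_elliptic J G L"
  using eig_on_tan_if_square_neg[OF assms(3-7)] assms(1,2) assms(7)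
  unfolding transv_elliptic_def by (metis complex.sel zero_complex.simps(2))

lemma exists_nonzero_orthogonal_3:
  fixes p q r :: real
  obtains x y z where "(x, y, z) \<noteq> (0, 0, 0)" "p * x + q * y + r * z = 0"
proof (cases "p = 0 \<and> q = 0")
  case True
  then show ?thesis
    using that[of 1 0 0] by simp
next
  case False
  then show ?thesis
    using that[of "- q" p 0] by (auto simp: algebra_simps)
qed

lemma transv_elliptic_if_l12_l13_l14_zero:
  assumes b: "b > 1" and L: "L \<in> Mh (1/2)" and z: "L$1 = 0" "L$2 = 0" "L$3 = 0"
  shows "transv_elliptic J23 (Gpro b) L"
proof -
  obtain x y z where xyz: "(x, y, z) \<noteq> (0, 0, 0)"
    and perp: "L$6 * x + (- L$5) * y + L$4 * z = 0"
    by (rule exists_nonzero_orthogonal_3)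
  define w where "w = (vector [x, y, z, 0, 0, 0] :: real^6)"
  define q where "q = 4*b*(b*(L$4)^2 + (L$5)^2 + (L$6)^2)"
  have "(L$4)^2 + (L$5)^2 + (L$6)^2 = 1"
    using L z by (simp add: Mh_half_iff)
  moreover have "(L$4)^2 \<le> b*(L$4)^2"
    using b mult_right_mono[of 1 b "(L$4)^2"] by simp
  ultimately have "q > 0"
    using b unfolding q_def by (smt (verit) mult_pos_pos)
  show ?thesis
  proof (rule transv_ellipticI[where c = 0 and d = 1 and w = w and \<omega> = "sqrt q"])
    show "\<forall>v\<in>tanMh L.
        0 * frechet_derivative J23 (at L) v + 1 * frechet_derivative (Gpro b) (at L) v = 0"
      using z by (simp add: frechet_derivative_Gpro grad_Gpro_def inner_6)
    show "w \<in> tanMh L" "w \<noteq> 0"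
      using z perp xyz
      by (auto simp: w_def tanMh_iff inner_6 hodge_star_def vec6_eq_iff algebra_simps)
    show "lin_hamvf J23 (Gpro b) 0 1 L *v w \<in> tanMh L"
      unfolding lin_hamvf_prolate_mult using z
      by (simp add: w_def hamvf_Gpro_deriv_def tanMh_iff inner_6 hodge_star_def algebra_simps)
    show "lin_hamvf J23 (Gpro b) 0 1 L *v (lin_hamvf J23 (Gpro b) 0 1 L *v w)
        = - ((sqrt q)^2) *\<^sub>R w"
      unfolding lin_hamvf_prolate_mult using z perp \<open>q > 0\<close>
      by (simp add: w_def hamvf_Gpro_deriv_def vec6_eq_iff q_def algebra_simps
          power2_eq_square, intro conjI; algebra)
  qed (use \<open>q > 0\<close> in simp_all)
qed

lemma transv_elliptic_if_l14_l24_l34_zero: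
  assumes b: "b > 1" and L: "L \<in> Mh (1/2)" and z: "L$3 = 0" "L$5 = 0" "L$6 = 0"
  shows "transv_elliptic J23 (Gpro b) L"
proof -
  obtain x y z where xyz: "(x, y, z) \<noteq> (0, 0, 0)"
    and perp: "L$4 * x + (- L$2) * y + L$1 * z = 0"
    by (rule exists_nonzero_orthogonal_3)
  define w where "w = (vector [0, 0, x, 0, y, z] :: real^6)"
  define q where "q = 4*b*((b-1)*((L$1)^2 + (L$2)^2) + b*(L$4)^2)"
  have sphere: "(L$1)^2 + (L$2)^2 = 1 - (L$4)^2"
    using L z by (simp add: Mh_half_iff algebra_simps)
  have "q = 4*b*(b - 1 + (L$4)^2)"
    unfolding q_def sphere by (simp add: algebra_simps)
  then have "q > 0"
    using b by (simp add: add_pos_nonneg)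
  show ?thesis
  proof (rule transv_ellipticI[where c = "2*b*L$4" and d = 1 and w = w and \<omega> = "sqrt q"])
    have "2*b*L$4 * frechet_derivative J23 (at L) v + 1 * frechet_derivative (Gpro b) (at L) v
        = 2*b*(L \<bullet> v)" for v
      unfolding frechet_derivative_J23 frechet_derivative_Gpro using z
      by (simp add: grad_Gpro_def inner_6 algebra_simps)
    then show "\<forall>v\<in>tanMh L.
        2*b*L$4 * frechet_derivative J23 (at L) v + 1 * frechet_derivative (Gpro b) (at L) v = 0"
      by (simp add: tanMh_iff)
    show "w \<in> tanMh L" "w \<noteq> 0"
      using z perp xyz
      by (auto simp: w_def tanMh_iff inner_6 hodge_star_def vec6_eq_iff algebra_simps)
    show "lin_hamvf J23 (Gpro b) (2*b*L$4) 1 L *v w \<in> tanMh L"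
      unfolding lin_hamvf_prolate_mult using z
      by (simp add: w_def hamvf_J23 hamvf_Gpro_deriv_def tanMh_iff inner_6 hodge_star_def
          algebra_simps)
    show "lin_hamvf J23 (Gpro b) (2*b*L$4) 1 L *v (lin_hamvf J23 (Gpro b) (2*b*L$4) 1 L *v w)
        = - ((sqrt q)^2) *\<^sub>R w"
      unfolding lin_hamvf_prolate_mult using z perp \<open>q > 0\<close>
      by (simp add: w_def hamvf_J23 hamvf_Gpro_deriv_def vec6_eq_iff q_def algebra_simps
          power2_eq_square, intro conjI; algebra)
  qed (use \<open>q > 0\<close> in simp_all)
qed

lemma prolate_rank_1_transv_elliptic:
  assumes b: "b > 1" and L: "L \<in> Mh (1/2)" and rank: "momentum_rank J23 (Gpro b) L = 1"
  shows "transv_elliptic J23 (Gpro b) L"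
proof -
  have "prolate_critical L"
    using prolate_rank_lt_2_imp_critical[OF b L] rank by simp
  then consider "L$1 = 0" "L$2 = 0" "L$3 = 0" | "L$3 = 0" "L$5 = 0" "L$6 = 0"
    | "L = vector [0, 0, L$3, 0, 0, 0]" "L$3 \<noteq> 0"
    using L unfolding prolate_critical_def by (auto simp: vec6_eq_iff Mh_half_iff)
  then show ?thesis
  proof cases
    case 1
    then show ?thesis
      by (rule transv_elliptic_if_l12_l13_l14_zero[OF b L])
  next
    case 2
    then show ?thesis
      by (rule transv_elliptic_if_l14_l24_l34_zero[OF b L])
  next
    case 3
    then show ?thesis
      using prolate_rank_0_at_l14_pole[of "L$3" b] rank by simp
  qed
qed

section \<open>Non-degenerate rank-zero points\<close>

lemma indep_on_tan_pole:
  assumes "b > 1" "p^2 \<noteq> q^2"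
  shows "indep_on_tan (vector [0, 0, p, q, 0, 0]) (jacm (hamvf J23) (vector [0, 0, p, q, 0, 0]))
    (jacm (hamvf (Gpro b)) (vector [0, 0, p, q, 0, 0]))"
    (is "indep_on_tan ?L _ _")
  unfolding indep_on_tan_def
proof (intro allI impI)
  fix c1 c2
  assume "\<forall>v\<in>tanMh ?L. lin_hamvf J23 (Gpro b) c1 c2 ?L *v v = 0"
  then have "lin_hamvf J23 (Gpro b) c1 c2 ?L *v vector [1, 0, 0, 0, 0, 0] = 0"
    "lin_hamvf J23 (Gpro b) c1 c2 ?L *v vector [0, 0, 0, 0, 1, 0] = 0"
    by (simp_all add: tanMh_pole_iff[OF assms(2)])
  then have "c1 = 2*b*q*c2" "(b-1)*p*c2 = 0" "c1 = 0" "p*c2 = 0"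
    unfolding lin_hamvf_prolate_mult
    by (simp_all add: hamvf_J23 hamvf_Gpro_deriv_def vec6_eq_iff algebra_simps)
  then show "c1 = 0 \<and> c2 = 0"
    using assms by auto
qed

lemma eig_on_tan_pole_iff:
  assumes "p^2 \<noteq> q^2"
  shows "eig_on_tan (vector [0, 0, p, q, 0, 0]) B \<mu> \<longleftrightarrow>
    (\<exists>u. u \<noteq> 0 \<and> u$3 = 0 \<and> u$4 = 0 \<and> cplx B *v u = \<mu> *s u)"
  unfolding eig_on_tan_def tanMh_pole_iff[OF assms] by (auto simp: complex_eq_iff)

lemma Re_eq_0_if_rotation_eigenvalue:
  fixes \<mu> a c :: complex
  assumes "\<mu> * a = of_real r * c" "\<mu> * c = - of_real r * a" "a \<noteq> 0 \<or> c \<noteq> 0" "r \<noteq> 0"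
  shows "Re \<mu> = 0"
proof -
  have "(\<mu>^2 + (of_real r)^2) * a = 0" "(\<mu>^2 + (of_real r)^2) * c = 0"
    using assms(1,2) by algebra+
  then have sq: "\<mu>^2 = - of_real (r^2)"
    using assms(3) by (auto simp: add_eq_0_iff)
  show ?thesis
  proof (rule ccontr)
    assume "Re \<mu> \<noteq> 0"
    then have "Im \<mu> = 0"
      using arg_cong[OF sq, of Im] by (simp add: power2_eq_square)
    then have "(Re \<mu>)^2 = - (r^2)"
      using arg_cong[OF sq, of Re] by (simp add: power2_eq_square)
    then show False
      using assms(4) \<open>Re \<mu> \<noteq> 0\<close> by (smt (verit) zero_less_power2)
  qed
qed

lemma cplx_lin_hamvf_l23_pole:
  "cplx (lin_hamvf J23 (Gpro b) 1 1 (vector [0, 0, 0, s, 0, 0])) *v u =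
    vector [of_real (2 * b * s - 1) * u$2, - of_real (2 * b * s - 1) * u$1, 0, 0, - u$6, u$5]"
  unfolding cplx_mult_vec lin_hamvf_prolate_mult
  by (simp add: vec6_eq_iff complex_eq_iff hamvf_J23 hamvf_Gpro_deriv_def algebra_simps)

lemma regular_on_tan_l23_pole:
  assumes b: "b > 1" and s: "s^2 = 1"
  shows "regular_on_tan (vector [0, 0, 0, s, 0, 0])
    (lin_hamvf J23 (Gpro b) 1 1 (vector [0, 0, 0, s, 0, 0]))"
proof -
  let ?L = "vector [0, 0, 0, s, 0, 0] :: real^6"
  \<comment> \<open>Kept opaque: inside the unfolded term the simplifier would rewrite \<open>1 *\<^sub>R _\<close>
    before the formula for \<open>cplx B\<close> could match.\<close>
  define B where "B = lin_hamvf J23 (Gpro b) 1 1 ?L"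
  define w where "w = 2 * b * s - 1"
  have B: "cplx B *v u = vector [of_real w * u$2, - of_real w * u$1, 0, 0, - u$6, u$5]" for u
    unfolding B_def w_def by (rule cplx_lin_hamvf_l23_pole)
  have "0^2 \<noteq> s^2"
    using s by simp
  note eig = eig_on_tan_pole_iff[OF this, of B]
  have "eig_on_tan ?L B (Complex 0 w)"
    unfolding eig by (intro exI[of _ "vector [1, \<i>, 0, 0, 0, 0]"])
      (simp add: B vec6_eq_iff complex_eq_iff)
  moreover have "eig_on_tan ?L B (Complex 0 (- w))"
    unfolding eig by (intro exI[of _ "vector [1, - \<i>, 0, 0, 0, 0]"])
      (simp add: B vec6_eq_iff complex_eq_iff)
  moreover have "eig_on_tan ?L B (Complex 0 (- 1))"
    unfolding eig by (intro exI[of _ "vector [0, 0, 0, 0, 1, \<i>]"])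
      (simp add: B vec6_eq_iff complex_eq_iff)
  moreover have "eig_on_tan ?L B (Complex 0 1)"
    unfolding eig by (intro exI[of _ "vector [0, 0, 0, 0, 1, - \<i>]"])
      (simp add: B vec6_eq_iff complex_eq_iff)
  moreover have "s = 1 \<or> s = -1"
    using s by (simp add: power2_eq_1_iff)
  then have "distinct [Complex 0 w, Complex 0 (- w), Complex 0 (- 1), Complex 0 1]"
    using b by (auto simp: w_def)
  ultimately show ?thesis
    unfolding regular_on_tan_def B_def by blast
qed

lemma eig_on_tan_l23_pole_Re_eq_0:
  assumes b: "b > 1" and s: "s^2 = 1"
    and \<mu>: "eig_on_tan (vector [0, 0, 0, s, 0, 0])
      (lin_hamvf J23 (Gpro b) 1 1 (vector [0, 0, 0, s, 0, 0])) \<mu>"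
  shows "Re \<mu> = 0"
proof -
  let ?L = "vector [0, 0, 0, s, 0, 0] :: real^6"
  define B where "B = lin_hamvf J23 (Gpro b) 1 1 ?L"
  define w where "w = 2 * b * s - 1"
  have "s = 1 \<or> s = -1"
    using s by (simp add: power2_eq_1_iff)
  then have "w \<noteq> 0"
    using b by (auto simp: w_def)
  have B: "cplx B *v u = vector [of_real w * u$2, - of_real w * u$1, 0, 0, - u$6, u$5]" for u
    unfolding B_def w_def by (rule cplx_lin_hamvf_l23_pole)
  have "0^2 \<noteq> s^2"
    using s by simp
  then obtain u where u: "u \<noteq> 0" "u$3 = 0" "u$4 = 0" "cplx B *v u = \<mu> *s u"
    using \<mu> eig_on_tan_pole_iff unfolding B_def by blast
  then have comp: "(cplx B *v u) $ i = \<mu> * u $ i" for i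
    by simp
  have q12: "\<mu> * u$1 = of_real w * u$2" "\<mu> * u$2 = - of_real w * u$1"
    and q56: "\<mu> * u$5 = of_real (- 1) * u$6" "\<mu> * u$6 = - of_real (- 1) * u$5"
    using comp[of 1] comp[of 2] comp[of 5] comp[of 6] by (simp_all add: B)
  consider "u$1 \<noteq> 0 \<or> u$2 \<noteq> 0" | "u$5 \<noteq> 0 \<or> u$6 \<noteq> 0"
    using u(1-3) by (auto simp: vec6_eq_iff)
  then show ?thesis
  proof cases
    case 1
    show ?thesis
      by (rule Re_eq_0_if_rotation_eigenvalue[OF q12 1 \<open>w \<noteq> 0\<close>])
  next
    case 2
    show ?thesis
      by (rule Re_eq_0_if_rotation_eigenvalue[OF q56 2]) simp
  qed
qed

lemma elliptic_elliptic_at_l23_pole: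
  assumes "b > 1" "s^2 = 1"
  shows "elliptic_elliptic J23 (Gpro b) (vector [0, 0, 0, s, 0, 0])"
proof -
  have "0^2 \<noteq> s^2"
    using assms(2) by simp
  then show ?thesis
    unfolding elliptic_elliptic_def Let_def
    using indep_on_tan_pole[OF assms(1)] regular_on_tan_l23_pole[OF assms]
      eig_on_tan_l23_pole_Re_eq_0[OF assms] by blast
qed

lemma char_poly_l14_pole:
  fixes \<mu> s h u1 u2 u5 u6 :: complex
  assumes "s * s = 1" "\<mu> * u1 = - u2 + 2 * s * u5" "\<mu> * u2 = u1 + 2 * s * u6"
    "\<mu> * u5 = - u6 + h * s * u1" "\<mu> * u6 = u5 + h * s * u2"
  shows "((\<mu>^2 - (2*h - 1))^2 + 8*h) * u1 = 0" "((\<mu>^2 - (2*h - 1))^2 + 8*h) * u2 = 0"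
    "((\<mu>^2 - (2*h - 1))^2 + 8*h) * u5 = 0" "((\<mu>^2 - (2*h - 1))^2 + 8*h) * u6 = 0"
  using assms by algebra+

lemma Re_Im_nonzero_if_quartic_root:
  fixes \<mu> :: complex
  assumes root: "(\<mu>^2 - of_real c)^2 + of_real d = 0" and d: "d > 0"
  shows "Re \<mu> \<noteq> 0 \<and> Im \<mu> \<noteq> 0"
proof (rule ccontr)
  assume "\<not> ?thesis"
  then have "Im (\<mu>^2) = 0"
    by (auto simp: power2_eq_square)
  then obtain t where t: "\<mu>^2 = of_real t"
    by (metis complex_is_Real_iff Reals_cases)
  then have "of_real ((t - c)^2 + d) = (0::complex)"
    using root by simp
  then have "(t - c)^2 + d = 0"
    by (simp only: of_real_eq_0_iff)
  with d show False
    by (smt (verit) zero_le_power2)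
qed

lemma cplx_lin_hamvf_l14_pole:
  "cplx (lin_hamvf J23 (Gpro b) 1 1 (vector [0, 0, s, 0, 0, 0])) *v u =
    vector [- u$2 + 2 * of_real s * u$5, u$1 + 2 * of_real s * u$6, 0, 0,
      - u$6 + of_real (2 * (b - 1)) * of_real s * u$1,
      u$5 + of_real (2 * (b - 1)) * of_real s * u$2]"
  unfolding cplx_mult_vec lin_hamvf_prolate_mult
  by (simp add: vec6_eq_iff complex_eq_iff hamvf_J23 hamvf_Gpro_deriv_def algebra_simps)

lemma regular_on_tan_l14_pole:
  assumes b: "b > 1" and s: "s^2 = 1"
  shows "regular_on_tan (vector [0, 0, s, 0, 0, 0])
    (lin_hamvf J23 (Gpro b) 1 1 (vector [0, 0, s, 0, 0, 0]))"
proof -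
  let ?L = "vector [0, 0, s, 0, 0, 0] :: real^6"
  define B where "B = lin_hamvf J23 (Gpro b) 1 1 ?L"
  define q where "q = sqrt (b - 1)"
  have q: "q > 0" and bq: "b = q * q + 1"
    using b by (simp_all add: q_def)
  have s': "s = 1 \<or> s = -1"
    using s by (simp add: power2_eq_1_iff)
  have "s^2 \<noteq> 0^2"
    using s by simp
  note eig = eig_on_tan_pole_iff[OF this, of B]
  have e: "eig_on_tan ?L B (Complex (2 * s * \<sigma> * q) \<tau>)"
    if "\<sigma> = 1 \<or> \<sigma> = -1" "\<tau> = 1 \<or> \<tau> = -1" for \<sigma> \<tau>
  proof -
    let ?u = "vector [1, Complex 0 (- \<tau>), 0, 0, Complex (\<sigma> * q) 0, Complex 0 (- \<tau> * \<sigma> * q)]"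
    have "cplx B *v ?u = Complex (2 * s * \<sigma> * q) \<tau> *s ?u"
      unfolding B_def cplx_lin_hamvf_l14_pole using that s'
      by (elim disjE) (simp_all add: vec6_eq_iff complex_eq_iff bq algebra_simps)
    then show ?thesis
      unfolding eig by (intro exI[of _ ?u]) (simp add: vec6_eq_iff)
  qed
  have "eig_on_tan ?L B (Complex (2 * s * q) 1)" "eig_on_tan ?L B (Complex (2 * s * q) (- 1))"
    "eig_on_tan ?L B (Complex (- (2 * s * q)) 1)" "eig_on_tan ?L B (Complex (- (2 * s * q)) (- 1))"
    using e[of 1 1] e[of 1 "- 1"] e[of "- 1" 1] e[of "- 1" "- 1"] by simp_all
  moreover have "distinct [Complex (2 * s * q) 1, Complex (2 * s * q) (- 1),
      Complex (- (2 * s * q)) 1, Complex (- (2 * s * q)) (- 1)]"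
    using q s' by auto
  ultimately show ?thesis
    unfolding regular_on_tan_def B_def by blast
qed

lemma eig_on_tan_l14_pole_Re_Im_nonzero:
  assumes b: "b > 1" and s: "s^2 = 1"
    and \<mu>: "eig_on_tan (vector [0, 0, s, 0, 0, 0])
      (lin_hamvf J23 (Gpro b) 1 1 (vector [0, 0, s, 0, 0, 0])) \<mu>"
  shows "Re \<mu> \<noteq> 0 \<and> Im \<mu> \<noteq> 0"
proof -
  let ?L = "vector [0, 0, s, 0, 0, 0] :: real^6"
  define B where "B = lin_hamvf J23 (Gpro b) 1 1 ?L"
  have B: "cplx B *v u = vector [- u$2 + 2 * of_real s * u$5, u$1 + 2 * of_real s * u$6, 0, 0,
      - u$6 + of_real (2 * (b - 1)) * of_real s * u$1,
      u$5 + of_real (2 * (b - 1)) * of_real s * u$2]" for u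
    unfolding B_def by (rule cplx_lin_hamvf_l14_pole)
  have "s^2 \<noteq> 0^2"
    using s by simp
  then obtain u where u: "u \<noteq> 0" "u$3 = 0" "u$4 = 0" "cplx B *v u = \<mu> *s u"
    using \<mu> eig_on_tan_pole_iff unfolding B_def by blast
  then have comp: "(cplx B *v u) $ i = \<mu> * u $ i" for i
    by simp
  have "of_real s * of_real s = (1::complex)"
    using s by (simp flip: of_real_mult add: power2_eq_square)
  note char = char_poly_l14_pole[OF this, of \<mu> "u$1" "u$2" "u$5" "u$6" "of_real (2 * (b - 1))"]
  have "u$1 \<noteq> 0 \<or> u$2 \<noteq> 0 \<or> u$5 \<noteq> 0 \<or> u$6 \<noteq> 0"
    using u(1-3) by (auto simp: vec6_eq_iff)
  then have "(\<mu>^2 - (2 * of_real (2 * (b - 1)) - 1))^2 + 8 * of_real (2 * (b - 1)) = 0"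
    using char comp[of 1] comp[of 2] comp[of 5] comp[of 6]
    by (auto simp: B)
  then have "(\<mu>^2 - of_real (4 * (b - 1) - 1))^2 + of_real (16 * (b - 1)) = 0"
    by simp
  then show ?thesis
    by (rule Re_Im_nonzero_if_quartic_root) (use b in simp)
qed

lemma focus_focus_at_l14_pole:
  assumes "b > 1" "s^2 = 1"
  shows "focus_focus J23 (Gpro b) (vector [0, 0, s, 0, 0, 0])"
proof -
  have "s^2 \<noteq> 0^2"
    using assms(2) by simp
  then show ?thesis
    unfolding focus_focus_def Let_def
    using indep_on_tan_pole[OF assms(1)] regular_on_tan_l14_pole[OF assms]
      eig_on_tan_l14_pole_Re_Im_nonzero[OF assms] by blast
qed

lemma prolate_rank_0_nondegenerate:
  assumes "b > 1" "L \<in> Mh (1/2)" "momentum_rank J23 (Gpro b) L = 0"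
  shows "elliptic_elliptic J23 (Gpro b) L \<or> focus_focus J23 (Gpro b) L"
  using assms(2,3)
proof (cases rule: prolate_rank_0_cases)
  case (elliptic s)
  then show ?thesis
    using elliptic_elliptic_at_l23_pole[OF assms(1)] by simp
next
  case (focus s)
  then show ?thesis
    using focus_focus_at_l14_pole[OF assms(1)] by simp
qed

section \<open>The circle action\<close>

definition J23_flow :: "real \<Rightarrow> real^6 \<Rightarrow> real^6" where
  "J23_flow t L = vector [cos t * L$1 - sin t * L$2, sin t * L$1 + cos t * L$2, L$3, L$4,
     cos t * L$5 - sin t * L$6, sin t * L$5 + cos t * L$6]"

lemma J23_flow_has_vector_derivative:
  "((\<lambda>t. J23_flow t L) has_vector_derivative hamvf J23 (J23_flow t L)) (at t)"
  unfolding has_vector_derivative_def J23_flow_def hamvf_J23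
  by (rule derivative_eq_intros refl)+ (simp add: fun_eq_iff vec6_eq_iff algebra_simps)

lemma J23_flow_in_Mh:
  assumes "L \<in> Mh (1/2)"
  shows "J23_flow t L \<in> Mh (1/2)"
proof -
  have cs: "(cos t)^2 + (sin t)^2 = 1"
    by simp
  have "(L$1)^2 + (L$2)^2 + (L$3)^2 + (L$4)^2 + (L$5)^2 + (L$6)^2 = 1"
    and "L$1 * L$6 - L$2 * L$5 + L$3 * L$4 = 0"
    using assms by (simp_all add: Mh_half_iff)
  then show ?thesis
    unfolding Mh_half_iff J23_flow_def using cs by (simp, algebra)
qed

lemma generates_S1_J23: "generates_S1 (Mh (1/2)) J23"
  unfolding generates_S1_def
proof (intro exI[of _ J23_flow] conjI ballI allI impI)
  fix L assume "L \<in> Mh (1/2)"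
  then show "J23_flow t L \<in> Mh (1/2)" for t
    by (rule J23_flow_in_Mh)
  show "J23_flow 0 L = L" "J23_flow (t + 2 * pi) L = J23_flow t L" for t
    by (simp_all add: J23_flow_def vec6_eq_iff)
  show "((\<lambda>s. J23_flow s L) has_vector_derivative hamvf J23 (J23_flow t L)) (at t)" for t
    by (rule J23_flow_has_vector_derivative)
next
  fix t :: real
  assume t: "0 < t \<and> t < 2 * pi"
  let ?L = "vector [1, 0, 0, 0, 0, 0] :: real^6"
  have "J23_flow t ?L \<noteq> ?L"
  proof
    assume "J23_flow t ?L = ?L"
    then have "cos t = 1"
      by (simp add: J23_flow_def vec6_eq_iff)
    then obtain n :: int where n: "t = n * 2 * pi"
      by (auto simp: cos_one_2pi_int)
    with t have "0 < n" "n < 1"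
      by (simp_all add: zero_less_mult_iff)
    then show False
      by simp
  qed
  moreover have "?L \<in> Mh (1/2)"
    by (simp add: Mh_half_iff)
  ultimately show "\<exists>L\<in>Mh (1/2). J23_flow t L \<noteq> L"
    by blast
qed

section \<open>Density of regular points\<close>

text \<open>Inverse of \<open>L \<mapsto> (L + *L, L - *L)\<close>, the self-dual and anti-self-dual parts of \<open>L\<close>,
  each read in the coordinates 1, 2, 3.\<close>

definition so4_of_so3_pair :: "real^3 \<Rightarrow> real^3 \<Rightarrow> real^6" where
  "so4_of_so3_pair A C = vector [(A$1 + C$1) / 2, (A$2 + C$2) / 2, (A$3 + C$3) / 2,
     (A$3 - C$3) / 2, (C$2 - A$2) / 2, (A$1 - C$1) / 2]"

lemma so4_of_so3_pair_parts:
  "L = so4_of_so3_pair (vector [L$1 + L$6, L$2 - L$5, L$3 + L$4])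
    (vector [L$1 - L$6, L$2 + L$5, L$3 - L$4])"
  by (simp add: so4_of_so3_pair_def vec6_eq_iff)

lemma so4_of_so3_pair_in_Mh_iff:
  "so4_of_so3_pair A C \<in> Mh (1/2) \<longleftrightarrow> norm A = 1 \<and> norm C = 1"
proof -
  let ?L = "so4_of_so3_pair A C"
  have "(?L$1)^2 + (?L$2)^2 + (?L$3)^2 + (?L$4)^2 + (?L$5)^2 + (?L$6)^2 = (A \<bullet> A + C \<bullet> C) / 2"
    "?L$1 * ?L$6 - ?L$2 * ?L$5 + ?L$3 * ?L$4 = (A \<bullet> A - C \<bullet> C) / 4"
    by (simp_all add: so4_of_so3_pair_def inner_vec_def sum_3 power2_eq_square field_simps)
  then show ?thesis
    by (auto simp: Mh_half_iff norm_eq_1)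
qed

lemma dist_so4_of_so3_pair_le: "dist (so4_of_so3_pair A C) (so4_of_so3_pair A B) \<le> dist C B"
proof -
  let ?D = "so4_of_so3_pair A C - so4_of_so3_pair A B"
  have "?D \<bullet> ?D = ((C - B) \<bullet> (C - B)) / 2"
    by (simp add: inner_6 inner_vec_def sum_3 so4_of_so3_pair_def power2_eq_square field_simps)
  then have "(dist (so4_of_so3_pair A C) (so4_of_so3_pair A B))^2 = (dist C B)^2 / 2"
    by (simp add: dist_norm power2_norm_eq_inner)
  then have "(dist (so4_of_so3_pair A C) (so4_of_so3_pair A B))^2 \<le> (dist C B)^2"
    using zero_le_power2[of "dist C B"] by linarith
  then show ?thesis
    by (rule power2_le_imp_le) simp
qed

lemma prolate_critical_so4_of_so3_pair:
  assumes "prolate_critical (so4_of_so3_pair A C)"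
  shows "C \<in> {- A, vector [A$1, A$2, - A$3], A}"
  using assms by (auto simp: prolate_critical_def so4_of_so3_pair_def vec_eq_iff forall_3)

lemma islimpt_unit_sphere_diff_finite:
  fixes B :: "real^3"
  assumes "norm B = 1" "finite F"
  shows "B islimpt (sphere 0 1 - F)"
proof -
  have "axis 1 1 \<in> sphere (0::real^3) 1" "- axis 1 1 \<in> sphere (0::real^3) 1"
    by simp_all
  moreover have "axis 1 1 \<noteq> - axis 1 (1::real)"
    by (metis axis_nth neg_equal_zero zero_neq_one vector_uminus_component)
  ultimately have "sphere (0::real^3) 1 \<noteq> {x}" for x
    by (metis singletonD)
  then have "B islimpt sphere 0 1"
    using assms(1) by (intro connected_imp_perfect connected_sphere) auto
  then have "B islimpt (F \<union> (sphere 0 1 - F))"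
    by (rule islimpt_subset) auto
  then show ?thesis
    using islimpt_Un_finite[OF assms(2)] by blast
qed

lemma Mh_subset_closure_noncritical:
  "Mh (1/2) \<subseteq> closure {L \<in> Mh (1/2). \<not> prolate_critical L}"
proof
  fix L assume L: "L \<in> Mh (1/2)"
  define A where "A = (vector [L$1 + L$6, L$2 - L$5, L$3 + L$4] :: real^3)"
  define B where "B = (vector [L$1 - L$6, L$2 + L$5, L$3 - L$4] :: real^3)"
  have L_eq: "L = so4_of_so3_pair A B"
    unfolding A_def B_def by (rule so4_of_so3_pair_parts)
  then have AB: "norm A = 1" "norm B = 1"
    using L so4_of_so3_pair_in_Mh_iff by auto
  have B_limpt: "B islimpt (sphere 0 1 - {- A, vector [A$1, A$2, - A$3], A})"
    using AB(2) by (rule islimpt_unit_sphere_diff_finite) simp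
  show "L \<in> closure {L \<in> Mh (1/2). \<not> prolate_critical L}"
    unfolding closure_approachable
  proof (intro allI impI)
    fix e :: real assume "e > 0"
    with B_limpt obtain C
      where C: "C \<in> sphere 0 1 - {- A, vector [A$1, A$2, - A$3], A}" "dist C B < e"
      unfolding islimpt_approachable by blast
    have "so4_of_so3_pair A C \<in> Mh (1/2)"
      using AB(1) C(1) by (simp add: so4_of_so3_pair_in_Mh_iff)
    moreover have "\<not> prolate_critical (so4_of_so3_pair A C)"
      using C(1) prolate_critical_so4_of_so3_pair by blast
    moreover have "dist (so4_of_so3_pair A C) L < e"
      unfolding L_eq using dist_so4_of_so3_pair_le C(2) by (rule le_less_trans)
    ultimately show "\<exists>y\<in>{L \<in> Mh (1/2). \<not> prolate_critical L}. dist y L < e"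
      by blast
  qed
qed

lemma prolate_rank_2_dense:
  assumes "b > 1"
  shows "Mh (1/2) \<subseteq> closure {L \<in> Mh (1/2). momentum_rank J23 (Gpro b) L = 2}"
proof -
  have "{L \<in> Mh (1/2). \<not> prolate_critical L} \<subseteq> {L \<in> Mh (1/2). momentum_rank J23 (Gpro b) L = 2}"
    using prolate_rank_eq_2[OF assms] by blast
  then show ?thesis
    using Mh_subset_closure_noncritical closure_mono by blast
qed

theorem corollary5:
  fixes b :: real
  assumes "b > 1"
  shows "gen_semitoric (Mh (1/2)) (\<lambda>L. L $ 4)
           (\<lambda>L. b * (L $ 1)^2 + b * (L $ 2)^2 + (L $ 3)^2)"
  unfolding gen_semitoric_def
proof (intro conjI ballI impI)
  fix L :: "real^6"
  show "J23 differentiable (at L)" "Gpro b differentiable (at L)"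
    "hamvf J23 differentiable (at L)" "hamvf (Gpro b) differentiable (at L)"
    by (rule differentiableI, rule has_derivative_J23 has_derivative_Gpro has_derivative_hamvf_J23
        has_derivative_hamvf_Gpro)+
  show "pbr J23 (Gpro b) L = 0"
    by (rule pbr_J23_Gpro)
  assume "L \<in> Mh (1/2)"
  then show "momentum_rank J23 (Gpro b) L = 0 \<Longrightarrow>
      elliptic_elliptic J23 (Gpro b) L \<or> focus_focus J23 (Gpro b) L"
    and "momentum_rank J23 (Gpro b) L = 1 \<Longrightarrow> transv_elliptic J23 (Gpro b) L"
    using prolate_rank_0_nondegenerate prolate_rank_1_transv_elliptic assms by blast+
qed (use prolate_rank_2_dense[OF assms] generates_S1_J23 in auto)

end
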